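(* Let $q$ be a prime power and let $C\subseteq \mathrm{GF}(q^m)^n$ be a (linear or nonlinear) code with $n\le m$, $|C|=q^{mk}$ for an integer $1\le k\le n$, and minimum rank distance $d_{\mathrm R}=n-k+1=2t+1$ for an integer $t\ge 0$. Suppose a codeword $\mathbf c\in C$ is transmitted and $\mathbf y=\mathbf c+\mathbf e$ is received, where the additive error $\mathbf e\in\mathrm{GF}(q^m)^n$ is random with a distribution under which all errors of the same rank are equally likely. Then the probability $P_E(t)$ that the bounded rank distance decoder makes a decoder error satisfies $$P_E(t)<K_q^{-2}q^{-t^2},\qquad\text{where } K_q=\prod_{j=1}^{\infty}(1-q^{-j}).$$
   Context: For $\mathbf x=(x_0,\dots,x_{n-1})\in\mathrm{GF}(q^m)^n$, $\mathrm{rk}(\mathbf x)$ is the dimension over $\mathrm{GF}(q)$ of the $\mathrm{GF}(q)$-span of $x_0,\dots,x_{n-1}$ (equivalently the rank of the $m\times n$ matrix over $\mathrm{GF}(q)$ obtained by expanding the coordinates in a basis of $\mathrm{GF}(q^m)$ over $\mathrm{GF}(q)$). The minimum rank distance of $C$ is the minimum of $\mathrm{rk}(\mathbf c-\mathbf d)$ over distinct codewords. The bounded rank distance decoder, given $\mathbf y$, outputs the (unique) codeword $\mathbf c'$ with $\mathrm{rk}(\mathbf y-\mathbf c')\le t$ if one exists and declares failure otherwise; a decoder error is the event that it outputs some $\mathbf c'\ne\mathbf c$. *)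

theory Defs
  imports "HOL-Analysis.Analysis" "HOL-Probability.Probability"
begin

text \<open>GF(q) is modelled by a finite field type 'K, GF(q^m) by a finite field type 'F,
  and GF(q) sits inside GF(q^m) via a field embedding emb. Then GF(q^m) is a
  GF(q)-vector space with scalar multiplication c x = emb c * x.\<close>

definition field_embedding :: "('K::field \<Rightarrow> 'F::field) \<Rightarrow> bool" where
  "field_embedding emb \<longleftrightarrow> emb 1 = 1 \<and> (\<forall>a b. emb (a + b) = emb a + emb b)
      \<and> (\<forall>a b. emb (a * b) = emb a * emb b)"

definition rk :: "('K::field \<Rightarrow> 'F::field) \<Rightarrow> 'F list \<Rightarrow> nat" where
  "rk emb x = vector_space.dim (\<lambda>c v. emb c * v) (set x)"

definition vsub :: "'F::field list \<Rightarrow> 'F list \<Rightarrow> 'F list" where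
  "vsub x y = map2 (-) x y"

definition vadd :: "'F::field list \<Rightarrow> 'F list \<Rightarrow> 'F list" where
  "vadd x y = map2 (+) x y"

definition min_rank_dist :: "('K::field \<Rightarrow> 'F::field) \<Rightarrow> 'F list set \<Rightarrow> nat" where
  "min_rank_dist emb C = Min {rk emb (vsub c d) | c d. c \<in> C \<and> d \<in> C \<and> c \<noteq> d}"

text \<open>Decoder error event for the bounded rank distance decoder with radius t,
  when c is sent and error e occurs: some codeword c' \<noteq> c lies within rank
  distance t of y = c + e (such a codeword is then the unique one output).\<close>
definition decoder_error :: "('K::field \<Rightarrow> 'F::field) \<Rightarrow> 'F list set \<Rightarrow> nat \<Rightarrow> 'F list \<Rightarrow> 'F list \<Rightarrow> bool" where
  "decoder_error emb C t c e \<longleftrightarrow> (\<exists>c'\<in>C. c' \<noteq> c \<and> rk emb (vsub (vadd c e) c') \<le> t)"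

end

theory Submission
  imports Defs
begin

text \<open>
  A decoder error with error e means e = (c' - c) + u for a codeword c' \<noteq> c and some u of
  rank at most t. Rank is invariant under the group GL of GF(q)-linear bijections of GF(q^m),
  acting coordinatewise, and so is the number g(x) of such u with rk (x + u) = r. The
  differences c' - c have rank > 2t and pairwise rank distance > 2t. Inside the GL-orbit of a
  vector x of rank w, such a set is parametrised by the images of w - 2t basis vectors of the
  span of the coordinates of x, so it has at most q^(m(w-2t)) elements, while the orbit has
  more than q^(mw) K_q elements. Averaging g over orbits therefore bounds the number of rank-r
  errors that cause a decoder error by q^(-2tm)/K_q times the number of vectors of rank at
  most t times the number of vectors of rank r, and counting t-dimensional subspaces shows
  that there are fewer than q^(mt + nt - t^2)/K_q vectors of rank at most t. As errors of equal
  rank are equally likely, the decoder error probability is below q^(-t^2)/K_q^2.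
\<close>

lemma finite_lists_of_length: "finite {xs :: 'a::finite list. length xs = n}"
  using finite_lists_length_eq[of "UNIV :: 'a set" n] by simp

lemma length_vadd [simp]: "length (vadd x y) = min (length x) (length y)"
  by (simp add: vadd_def)

lemma length_vsub [simp]: "length (vsub x y) = min (length x) (length y)"
  by (simp add: vsub_def)

lemma nth_vadd: "i < length x \<Longrightarrow> i < length y \<Longrightarrow> vadd x y ! i = x ! i + y ! i"
  by (simp add: vadd_def)

lemma nth_vsub: "i < length x \<Longrightarrow> i < length y \<Longrightarrow> vsub x y ! i = x ! i - y ! i"
  by (simp add: vsub_def)

lemma vsub_map: "vsub (map f xs) (map g xs) = map (\<lambda>z. f z - g z) xs"
  by (induction xs) (auto simp: vsub_def)

lemma map_vadd:
  assumes "\<And>a b. h (a + b) = h a + h b"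
  shows "map h (vadd x y) = vadd (map h x) (map h y)"
proof (induction x arbitrary: y)
  case (Cons a x)
  then show ?case by (cases y) (auto simp: vadd_def assms)
qed (simp add: vadd_def)

lemma min_rank_dist_le_rk:
  assumes "finite C" "c1 \<in> C" "c2 \<in> C" "c1 \<noteq> c2"
  shows "min_rank_dist emb C \<le> rk emb (vsub c1 c2)"
proof -
  let ?D = "{rk emb (vsub c d) | c d. c \<in> C \<and> d \<in> C \<and> c \<noteq> d}"
  have "?D \<subseteq> (\<lambda>(c, d). rk emb (vsub c d)) ` (C \<times> C)" by fast
  then have "finite ?D" using assms(1) by (simp add: finite_subset)
  moreover have "rk emb (vsub c1 c2) \<in> ?D" using assms(2-4) by blast
  ultimately show ?thesis unfolding min_rank_dist_def by (rule Min_le)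
qed

lemma card_decoder_error_le_sum:
  fixes emb :: "'K::field \<Rightarrow> 'F::{finite,field}"
  assumes C_len: "\<forall>x\<in>C. length x = n" and c: "c \<in> C" and fin: "finite C"
  shows "card {e. length e = n \<and> rk emb e = r \<and> decoder_error emb C t c e}
    \<le> (\<Sum>x\<in>{vsub c' c | c'. c' \<in> C \<and> c' \<noteq> c}.
          card {u. length u = n \<and> rk emb u \<le> t \<and> rk emb (vadd x u) = r})"
    (is "card ?E \<le> (\<Sum>x\<in>?X. card (?U x))")
proof -
  have finX: "finite ?X" using fin by simp
  have finU: "finite (?U x)" for x
    by (rule finite_subset[OF _ finite_lists_of_length[of n]]) auto
  have finS: "finite (SIGMA x:?X. ?U x)" using finX finU by (rule finite_SigmaI)
  have "?E \<subseteq> (\<lambda>(x, u). vadd x u) ` (SIGMA x:?X. ?U x)"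
  proof
    fix e assume e: "e \<in> ?E"
    then obtain c' where c': "c' \<in> C" "c' \<noteq> c" "rk emb (vsub (vadd c e) c') \<le> t"
      unfolding decoder_error_def by blast
    have lengths: "length c = n" "length c' = n" "length e = n" using C_len c c' e by auto
    have split: "vadd (vsub c' c) (vsub (vadd c e) c') = e"
      by (rule nth_equalityI) (simp_all add: lengths nth_vadd nth_vsub)
    have "vsub c' c \<in> ?X" using c' by blast
    moreover have "vsub (vadd c e) c' \<in> ?U (vsub c' c)"
      using c'(3) e lengths by (simp add: split)
    ultimately show "e \<in> (\<lambda>(x, u). vadd x u) ` (SIGMA x:?X. ?U x)"
      using split by force
  qed
  then have "card ?E \<le> card ((\<lambda>(x, u). vadd x u) ` (SIGMA x:?X. ?U x))"
    using finS by (intro card_mono) simp_all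
  also have "\<dots> \<le> card (SIGMA x:?X. ?U x)"
    using finS by (rule card_image_le)
  also have "\<dots> = (\<Sum>x\<in>?X. card (?U x))"
    using finU by (intro card_SigmaI[OF finX]) blast
  finally show ?thesis .
qed

lemma sum_card_shift:
  fixes P Q :: "'F::{finite,field} list \<Rightarrow> bool"
  shows "(\<Sum>y\<in>{y. length y = n}. card {u. length u = n \<and> P u \<and> Q (vadd y u)})
    = card {u. length u = n \<and> P u} * card {e. length e = n \<and> Q e}"
proof -
  define V where "V = {y :: 'F list. length y = n}"
  define A where "A = {u \<in> V. P u}"
  have finV: "finite V"
    unfolding V_def by (rule finite_lists_of_length)
  then have finA: "finite A" unfolding A_def by simp
  have shift: "card {y \<in> V. Q (vadd y u)} = card {e \<in> V. Q e}" if u: "u \<in> A" for u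
  proof -
    have "vsub (vadd y u) u = y" if "y \<in> V" for y
      using u that by (auto intro!: nth_equalityI simp: nth_vadd nth_vsub A_def V_def)
    moreover have "vadd (vsub e u) u = e" if "e \<in> V" for e
      using u that by (auto intro!: nth_equalityI simp: nth_vadd nth_vsub A_def V_def)
    ultimately show ?thesis
      using u by (intro bij_betw_same_card[of "\<lambda>y. vadd y u"] bij_betw_byWitness[of _ "\<lambda>e. vsub e u"])
        (auto simp: A_def V_def)
  qed
  have count: "card {u \<in> A. R u} = (\<Sum>u\<in>A. if R u then 1 else 0)" for R
    by (simp only: card_eq_sum sum.inter_filter[OF finA])
  have "(\<Sum>y\<in>V. card {u \<in> A. Q (vadd y u)}) = (\<Sum>u\<in>A. card {y \<in> V. Q (vadd y u)})"
    unfolding count by (subst sum.swap) (simp only: card_eq_sum sum.inter_filter[OF finV])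
  also have "\<dots> = card A * card {e \<in> V. Q e}"
    using shift by simp
  finally show ?thesis
    unfolding A_def V_def by (simp only: mem_Collect_eq conj_assoc)
qed

text \<open>Double counting: spread each g x evenly over orb x; then every y \<in> V receives weight at
  most \<rho> * g y.\<close>
lemma sum_le_orbit_density_sum:
  fixes g :: "'a \<Rightarrow> real" and orb :: "'a \<Rightarrow> 'a set" and \<rho> :: real
  assumes fin: "finite V" and X: "X \<subseteq> V"
    and orb_sub: "\<And>x. x \<in> X \<Longrightarrow> orb x \<subseteq> V"
    and orb_self: "\<And>x. x \<in> X \<Longrightarrow> x \<in> orb x"
    and orb_sym: "\<And>x y. x \<in> X \<Longrightarrow> y \<in> orb x \<Longrightarrow> x \<in> orb y"
    and g_orb: "\<And>x y. x \<in> X \<Longrightarrow> y \<in> orb x \<Longrightarrow> g y = g x"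
    and g_nonneg: "\<And>y. y \<in> V \<Longrightarrow> 0 \<le> g y"
    and density: "\<And>x y. x \<in> X \<Longrightarrow> y \<in> orb x \<Longrightarrow> card (X \<inter> orb y) \<le> \<rho> * card (orb x)"
    and "0 \<le> \<rho>"
  shows "(\<Sum>x\<in>X. g x) \<le> \<rho> * (\<Sum>y\<in>V. g y)"
proof -
  have finX: "finite X" using fin X by (rule rev_finite_subset)
  have card_orb: "0 < card (orb x)" if "x \<in> X" for x
    using that orb_self orb_sub fin by (metis card_gt_0_iff empty_iff finite_subset)
  have weight: "(\<Sum>x\<in>{x\<in>X. y \<in> orb x}. 1 / card (orb x)) \<le> \<rho>" for y
  proof (cases "{x\<in>X. y \<in> orb x} = {}")
    case False
    then obtain x0 where x0: "x0 \<in> X" "y \<in> orb x0" by blast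
    let ?N = "real (card (X \<inter> orb y))"
    have sub: "{x\<in>X. y \<in> orb x} \<subseteq> X \<inter> orb y" using orb_sym by blast
    have N_pos: "0 < ?N"
      using x0 orb_sym finX by (auto simp: card_gt_0_iff)
    have "1 / card (orb x) \<le> \<rho> / ?N" if "x \<in> {x\<in>X. y \<in> orb x}" for x
      using that density card_orb N_pos by (simp add: field_simps)
    then have "(\<Sum>x\<in>{x\<in>X. y \<in> orb x}. 1 / card (orb x)) \<le> card {x\<in>X. y \<in> orb x} * (\<rho> / ?N)"
      by (rule sum_bounded_above)
    also have "\<dots> \<le> ?N * (\<rho> / ?N)"
      using card_mono[OF _ sub] finX \<open>0 \<le> \<rho>\<close> by (intro mult_right_mono) simp_all
    finally show ?thesis using N_pos by simp
  qed (simp only: sum.empty \<open>0 \<le> \<rho>\<close>)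
  have average: "g x = (\<Sum>y\<in>V. if y \<in> orb x then g y / card (orb x) else 0)" if x: "x \<in> X" for x
  proof -
    have "(\<Sum>y\<in>V. if y \<in> orb x then g y / card (orb x) else 0) = (\<Sum>y\<in>orb x. g x / card (orb x))"
      using fin orb_sub[OF x] g_orb[OF x] by (simp add: sum.inter_filter[symmetric] Int_absorb1 Collect_conj_eq)
    also have "\<dots> = g x" using card_orb[OF x] by simp
    finally show ?thesis by simp
  qed
  have "(\<Sum>x\<in>X. g x) = (\<Sum>y\<in>V. \<Sum>x\<in>X. if y \<in> orb x then g y / card (orb x) else 0)"
    using average by (subst sum.swap) simp
  also have "\<dots> = (\<Sum>y\<in>V. g y * (\<Sum>x\<in>X. if y \<in> orb x then 1 / card (orb x) else 0))"
    by (auto simp: sum_distrib_left intro!: sum.cong)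
  also have "\<dots> = (\<Sum>y\<in>V. g y * (\<Sum>x\<in>{x\<in>X. y \<in> orb x}. 1 / card (orb x)))"
    using finX by (simp add: sum.inter_filter)
  also have "\<dots> \<le> (\<Sum>y\<in>V. g y * \<rho>)"
    using weight g_nonneg by (intro sum_mono mult_left_mono) auto
  also have "\<dots> = \<rho> * (\<Sum>y\<in>V. g y)"
    by (simp add: sum_distrib_left ac_simps)
  finally show ?thesis .
qed

lemma prod_power_diff_ge:
  fixes q :: real
  assumes q: "1 < q" and w: "w \<le> d"
  shows "q ^ (d * w) * (\<Prod>j<d. 1 - 1 / q ^ Suc j) \<le> (\<Prod>i<w. q ^ d - q ^ i)"
proof -
  have factor: "0 \<le> 1 - q ^ i / q ^ d \<and> 1 - q ^ i / q ^ d \<le> 1" if "i < d" for i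
    using q that by (simp add: power_increasing)
  have "(\<Prod>j<d. 1 - 1 / q ^ Suc j) = (\<Prod>i<d. 1 - q ^ i / q ^ d)"
  proof (rule prod.reindex_bij_witness[where i = "\<lambda>i. d - Suc i" and j = "\<lambda>i. d - Suc i"])
    fix i assume "i \<in> {..<d}"
    then have "d = (d - Suc i) + Suc i" by simp
    then have "q ^ d = q ^ (d - Suc i) * q ^ Suc i" by (metis power_add)
    then show "1 - q ^ (d - Suc i) / q ^ d = 1 - 1 / q ^ Suc i"
      using q by (simp del: power_Suc)
  qed auto
  also have "\<dots> = (\<Prod>i<w. 1 - q ^ i / q ^ d) * (\<Prod>i\<in>{w..<d}. 1 - q ^ i / q ^ d)"
    using w by (subst prod.union_disjoint[symmetric]) (auto intro: prod.cong)
  also have "\<dots> \<le> (\<Prod>i<w. 1 - q ^ i / q ^ d)"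
    using factor w by (intro mult_left_le prod_le_1 prod_nonneg) auto
  finally have "q ^ (d * w) * (\<Prod>j<d. 1 - 1 / q ^ Suc j) \<le> (\<Prod>i<w. q ^ d) * (\<Prod>i<w. 1 - q ^ i / q ^ d)"
    using q by (simp add: power_mult)
  also have "\<dots> = (\<Prod>i<w. q ^ d * (1 - q ^ i / q ^ d))"
    by (simp only: prod.distrib)
  also have "\<dots> = (\<Prod>i<w. q ^ d - q ^ i)"
    using q by (intro prod.cong) (simp_all add: right_diff_distrib)
  finally show ?thesis .
qed

lemma one_minus_inverse_power_pos:
  fixes q :: real
  shows "1 < q \<Longrightarrow> 0 < 1 - 1 / q ^ Suc j"
  using one_less_power[of q "Suc j"] by (simp del: power_Suc)

lemma convergent_prod_one_minus_inverse_powers: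
  fixes q :: real
  assumes "1 < q"
  shows "convergent_prod (\<lambda>j. 1 - 1 / q ^ Suc j)"
proof -
  have "summable (\<lambda>j. (1 / q) * (1 / q) ^ j)"
    using assms by (intro summable_mult summable_geometric) simp
  then have "summable (\<lambda>j. norm (1 - 1 / q ^ Suc j - 1))"
    using assms by (simp add: power_divide)
  then show ?thesis
    by (intro abs_convergent_prod_imp_convergent_prod summable_imp_abs_convergent_prod)
qed

lemma prodinf_one_minus_inverse_powers_pos:
  fixes q :: real
  assumes "1 < q"
  shows "0 < (\<Prod>j. 1 - 1 / q ^ Suc j)"
  using has_prod_pos[OF convergent_prod_has_prod[OF convergent_prod_one_minus_inverse_powers[OF assms]]]
    one_minus_inverse_power_pos[OF assms] by blast

lemma prodinf_one_minus_inverse_powers_less: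
  fixes q :: real
  assumes q: "1 < q"
  shows "(\<Prod>j. 1 - 1 / q ^ Suc j) < (\<Prod>j<a. 1 - 1 / q ^ Suc j)"
proof -
  let ?f = "\<lambda>j. 1 - 1 / q ^ Suc j"
  have partial_mono: "(\<Prod>j<n. ?f j) \<le> (\<Prod>j<Suc a. ?f j)" if "Suc a \<le> n" for n
    using that
  proof (induction n rule: dec_induct)
    case (step n)
    have "(\<Prod>j<Suc n. ?f j) \<le> (\<Prod>j<n. ?f j)"
      unfolding prod.lessThan_Suc using one_minus_inverse_power_pos[OF q] q
      by (intro mult_left_le prod_nonneg) (simp_all add: less_imp_le del: power_Suc)
    then show ?case using step.IH by linarith
  qed simp
  have "(\<Prod>j. ?f j) \<le> (\<Prod>j<Suc a. ?f j)"
    by (rule prodinf_le_const[OF convergent_prod_one_minus_inverse_powers[OF q] partial_mono])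
  also have "\<dots> < (\<Prod>j<a. ?f j)"
    using one_minus_inverse_power_pos[OF q] q by (simp add: prod_pos)
  finally show ?thesis .
qed

lemma measure_pmf_le_classwise_fraction:
  fixes p :: "'a pmf" and cls :: "'a \<Rightarrow> 'b" and \<delta> :: real
  assumes fin: "finite V" and supp: "set_pmf p \<subseteq> V"
    and uniform: "\<And>x y. x \<in> V \<Longrightarrow> y \<in> V \<Longrightarrow> cls x = cls y \<Longrightarrow> pmf p x = pmf p y"
    and fraction: "\<And>r. card {e \<in> E \<inter> V. cls e = r} \<le> \<delta> * card {e \<in> V. cls e = r}"
    and "0 \<le> \<delta>"
  shows "measure_pmf.prob p E \<le> \<delta>"
proof -
  have per_class: "(\<Sum>e\<in>{e \<in> E \<inter> V. cls e = r}. pmf p e) \<le> \<delta> * (\<Sum>e\<in>{e \<in> V. cls e = r}. pmf p e)"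
    if r: "r \<in> cls ` V" for r
  proof -
    obtain e0 where e0: "e0 \<in> V" "cls e0 = r" using r by blast
    then have "pmf p e = pmf p e0" if "e \<in> V" "cls e = r" for e
      using that uniform by blast
    then have "(\<Sum>e\<in>{e \<in> E \<inter> V. cls e = r}. pmf p e) = card {e \<in> E \<inter> V. cls e = r} * pmf p e0"
      and "(\<Sum>e\<in>{e \<in> V. cls e = r}. pmf p e) = card {e \<in> V. cls e = r} * pmf p e0"
      by simp_all
    then show ?thesis
      using mult_right_mono[OF fraction[of r] pmf_nonneg[of p e0]] by (simp add: mult.assoc)
  qed
  have "measure_pmf.prob p E \<le> measure_pmf.prob p (E \<inter> V)"
    using supp by (intro measure_pmf.finite_measure_mono_AE) (auto simp: AE_measure_pmf_iff)
  also have "\<dots> = (\<Sum>e\<in>E \<inter> V. pmf p e)"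
    using fin by (simp add: measure_measure_pmf_finite)
  also have "\<dots> = (\<Sum>r\<in>cls ` V. \<Sum>e\<in>{e \<in> E \<inter> V. cls e = r}. pmf p e)"
    using fin by (intro sum.group[symmetric]) auto
  also have "\<dots> \<le> (\<Sum>r\<in>cls ` V. \<delta> * (\<Sum>e\<in>{e \<in> V. cls e = r}. pmf p e))"
    by (rule sum_mono) (rule per_class)
  also have "\<dots> = \<delta> * (\<Sum>e\<in>V. pmf p e)"
    using fin by (simp add: sum.group sum_distrib_left[symmetric])
  also have "\<dots> = \<delta> * measure_pmf.prob p V"
    using fin by (simp add: measure_measure_pmf_finite)
  also have "\<dots> \<le> \<delta>"
    using \<open>0 \<le> \<delta>\<close> by (simp add: mult_left_le)
  finally show ?thesis .
qed

lemma card_finite_field_ge_2: "2 \<le> CARD('a::{finite,field})"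
proof -
  have "card {0 :: 'a, 1} \<le> CARD('a)" by (rule card_mono) simp_all
  then show ?thesis by simp
qed

locale finite_field_extension =
  fixes emb :: "'K::{finite,field} \<Rightarrow> 'F::{finite,field}"
  assumes field_embedding: "field_embedding emb"
begin

lemma emb_add: "emb (a + b) = emb a + emb b"
  and emb_mult: "emb (a * b) = emb a * emb b"
  and emb_1: "emb 1 = 1"
  using field_embedding by (simp_all add: field_embedding_def)

lemma emb_diff: "emb (a - b) = emb a - emb b"
  using emb_add[of "a - b" b] by (simp add: eq_diff_eq)

sublocale Kv: vector_space "\<lambda>c (v::'F). emb c * v"
  by unfold_locales (simp_all add: emb_add emb_mult emb_1 algebra_simps)

sublocale Kv: finite_dimensional_vector_space "\<lambda>c (v::'F). emb c * v" "Kv.extend_basis {}"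
  by unfold_locales
    (simp_all add: Kv.independent_extend_basis[OF Kv.independent_empty]
      Kv.span_extend_basis[OF Kv.independent_empty])

sublocale KP: finite_dimensional_vector_space_pair_1
    "\<lambda>c (v::'F). emb c * v" "Kv.extend_basis {}" "\<lambda>c (v::'F). emb c * v"
  by unfold_locales

abbreviation klin :: "('F \<Rightarrow> 'F) \<Rightarrow> bool" where
  "klin h \<equiv> Vector_Spaces.linear (\<lambda>c (v::'F). emb c * v) (\<lambda>c v. emb c * v) h"

lemma rk_eq_dim: "rk emb x = Kv.dim (set x)"
  by (simp add: rk_def)

lemma rk_le_length: "rk emb x \<le> length x"
  unfolding rk_eq_dim using Kv.dim_le_card'[of "set x"] card_length[of x] by simp

lemma card_span:
  assumes ind: "Kv.independent S"
  shows "card (Kv.span S) = CARD('K) ^ card S"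
proof -
  have fin: "finite S" using ind Kv.finiteI_independent by blast
  define comb where "comb u = (\<Sum>v\<in>S. emb (u v) * v)" for u
  have span_eq: "Kv.span S = comb ` (S \<rightarrow>\<^sub>E UNIV)"
  proof
    show "Kv.span S \<subseteq> comb ` (S \<rightarrow>\<^sub>E UNIV)"
    proof
      fix x assume "x \<in> Kv.span S"
      then obtain u where "x = comb u" unfolding Kv.span_finite[OF fin] comb_def by blast
      moreover have "comb u = comb (restrict u S)" unfolding comb_def by (rule sum.cong) auto
      ultimately show "x \<in> comb ` (S \<rightarrow>\<^sub>E UNIV)" by auto
    qed
  qed (auto simp: Kv.span_finite[OF fin] comb_def)
  have "inj_on comb (S \<rightarrow>\<^sub>E UNIV)"
  proof (rule inj_onI)
    fix u w assume u: "u \<in> S \<rightarrow>\<^sub>E UNIV" and w: "w \<in> S \<rightarrow>\<^sub>E UNIV" and "comb u = comb w"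
    then have "(\<Sum>v\<in>S. emb (u v - w v) * v) = 0"
      by (simp add: comb_def emb_diff left_diff_distrib sum_subtractf)
    moreover have "\<forall>c. (\<forall>v\<in>S. c v = 0) \<or> (\<Sum>v\<in>S. emb (c v) * v) \<noteq> 0"
      using ind Kv.dependent_finite[OF fin] by auto
    ultimately have "\<forall>v\<in>S. u v - w v = 0"
      by (auto dest: spec[where x = "\<lambda>v. u v - w v"])
    then show "u = w" using u w by (metis PiE_ext right_minus_eq)
  qed
  then show ?thesis by (simp add: span_eq card_image card_PiE fin)
qed

lemma card_subspace:
  assumes "Kv.subspace S"
  shows "card S = CARD('K) ^ Kv.dim S"
proof -
  obtain B where "B \<subseteq> S" "Kv.independent B" "Kv.span B = S" "card B = Kv.dim S"
    using Kv.basis_subspace_exists[OF assms] by metis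
  then show ?thesis using card_span by metis
qed

lemma dim_UNIV_eq:
  assumes "CARD('F) = CARD('K) ^ m"
  shows "Kv.dim (UNIV :: 'F set) = m"
  using card_subspace[OF Kv.subspace_UNIV] assms card_finite_field_ge_2[where 'a = 'K]
  by (simp add: power_inject_exp)

definition independent_tuples :: "'a set \<Rightarrow> 'F set \<Rightarrow> ('a \<Rightarrow> 'F) set" where
  "independent_tuples B W =
    {y \<in> B \<rightarrow>\<^sub>E UNIV. y ` B \<subseteq> W \<and> inj_on y B \<and> Kv.independent (y ` B)}"

lemma finite_independent_tuples: "finite B \<Longrightarrow> finite (independent_tuples B W)"
  unfolding independent_tuples_def by (rule finite_subset[of _ "B \<rightarrow>\<^sub>E UNIV"]) (auto intro: finite_PiE)

lemma independent_tuples_insert: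
  assumes b: "b \<notin> B"
  shows "independent_tuples (insert b B) W
    = (\<lambda>(y, v). y(b := v)) ` (SIGMA y:independent_tuples B W. W - Kv.span (y ` B))"
proof
  show "(\<lambda>(y, v). y(b := v)) ` (SIGMA y:independent_tuples B W. W - Kv.span (y ` B))
    \<subseteq> independent_tuples (insert b B) W"
  proof clarify
    fix y v assume y: "y \<in> independent_tuples B W" and v: "v \<in> W" "v \<notin> Kv.span (y ` B)"
    have image: "y(b := v) ` insert b B = insert v (y ` B)" using b by auto
    have "v \<notin> y ` B" using v(2) Kv.span_superset by blast
    have "y(b := v) \<in> insert b B \<rightarrow>\<^sub>E UNIV"
      using y b by (auto simp: independent_tuples_def PiE_iff extensional_def)
    moreover have "y(b := v) ` insert b B \<subseteq> W"
      unfolding image using y v by (auto simp: independent_tuples_def)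
    moreover have "inj_on (y(b := v)) (insert b B)"
      using y b \<open>v \<notin> y ` B\<close> by (auto simp: independent_tuples_def inj_on_def)
    moreover have "Kv.independent (y(b := v) ` insert b B)"
      unfolding image using y v(2) by (intro Kv.independent_insertI) (simp_all add: independent_tuples_def)
    ultimately show "y(b := v) \<in> independent_tuples (insert b B) W"
      unfolding independent_tuples_def by blast
  qed
  show "independent_tuples (insert b B) W
    \<subseteq> (\<lambda>(y, v). y(b := v)) ` (SIGMA y:independent_tuples B W. W - Kv.span (y ` B))"
  proof
    fix z assume z: "z \<in> independent_tuples (insert b B) W"
    define y where "y = z(b := undefined)"
    have image: "y ` B = z ` B" using b unfolding y_def by auto
    have "Kv.independent (y ` B)" unfolding image
      using z Kv.independent_mono[of "z ` insert b B" "z ` B"] by (auto simp: independent_tuples_def)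
    moreover have "y \<in> B \<rightarrow>\<^sub>E UNIV" "y ` B \<subseteq> W" "inj_on y B"
      using z b unfolding image
      by (auto simp: y_def independent_tuples_def PiE_iff extensional_def inj_on_def)
    ultimately have y_mem: "y \<in> independent_tuples B W"
      unfolding independent_tuples_def by blast
    have "z b \<notin> z ` B" using z b by (auto simp: independent_tuples_def inj_on_def)
    moreover have "Kv.independent (insert (z b) (z ` B))"
      using z by (simp add: independent_tuples_def)
    ultimately have "z b \<in> W - Kv.span (y ` B)"
      using z unfolding image Kv.independent_insert by (auto simp: independent_tuples_def)
    then show "z \<in> (\<lambda>(y, v). y(b := v)) ` (SIGMA y:independent_tuples B W. W - Kv.span (y ` B))"
      using y_mem by (intro image_eqI[of _ _ "(y, z b)"]) (simp_all add: y_def)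
  qed
qed

lemma inj_on_independent_tuples_insert:
  assumes b: "b \<notin> B"
  shows "inj_on (\<lambda>(y, v). y(b := v)) (SIGMA y:independent_tuples B W. W - Kv.span (y ` B))"
proof (rule inj_onI, clarify)
  fix y1 v1 y2 v2
  assume y1: "y1 \<in> independent_tuples B W" and y2: "y2 \<in> independent_tuples B W"
    and eq: "y1(b := v1) = y2(b := v2)"
  have "y1 x = y2 x" for x
  proof (cases "x = b")
    case True
    then show ?thesis using y1 y2 b by (auto simp: independent_tuples_def PiE_iff extensional_def)
  qed (use fun_cong[OF eq, of x] in simp)
  then show "y1 = y2 \<and> v1 = v2" using fun_cong[OF eq, of b] by auto
qed

lemma span_independent_tuple:
  assumes "y \<in> independent_tuples B W" "Kv.subspace W"
  shows "Kv.span (y ` B) \<subseteq> W" and "card (Kv.span (y ` B)) = CARD('K) ^ card B"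
proof -
  show "Kv.span (y ` B) \<subseteq> W"
    using assms by (intro Kv.span_minimal) (simp_all add: independent_tuples_def)
  have "card (y ` B) = card B"
    using assms(1) by (simp add: independent_tuples_def card_image)
  then show "card (Kv.span (y ` B)) = CARD('K) ^ card B"
    using assms(1) card_span by (simp add: independent_tuples_def)
qed

text \<open>The i-th vector of such a tuple may be any element of W outside the span of the previous
  ones, which has q^i elements.\<close>
lemma card_independent_tuples:
  fixes B :: "'a set"
  assumes "finite B" and W: "Kv.subspace W"
  shows "real (card (independent_tuples B W)) = (\<Prod>i<card B. real (card W) - real CARD('K) ^ i)"
  using assms(1)
proof (induction B rule: finite_induct)
  case empty
  have "independent_tuples ({} :: 'a set) W = {\<lambda>_. undefined}"
    by (auto simp: independent_tuples_def Kv.independent_empty)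
  then show ?case by simp
next
  case (insert b B)
  have complement: "card (W - Kv.span (y ` B)) = card W - CARD('K) ^ card B"
    and le: "CARD('K) ^ card B \<le> card W"
    if "y \<in> independent_tuples B W" for y
    using span_independent_tuple[OF that W] card_Diff_subset[of "Kv.span (y ` B)" W]
      card_mono[of W "Kv.span (y ` B)"] by simp_all
  have "card (independent_tuples (insert b B) W)
      = card (SIGMA y:independent_tuples B W. W - Kv.span (y ` B))"
    unfolding independent_tuples_insert[OF insert(2)]
    by (rule card_image[OF inj_on_independent_tuples_insert[OF insert(2)]])
  also have "\<dots> = (\<Sum>y\<in>independent_tuples B W. card W - CARD('K) ^ card B)"
    using complement by (simp add: card_SigmaI finite_independent_tuples insert(1))
  finally have "real (card (independent_tuples (insert b B) W))
      = real (card (independent_tuples B W)) * (real (card W) - real CARD('K) ^ card B)"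
    using le by (cases "independent_tuples B W = {}") (auto simp: of_nat_diff)
  then show ?case using insert by (simp add: prod.lessThan_Suc)
qed

definition subspaces_of_dim :: "nat \<Rightarrow> 'F set set" where
  "subspaces_of_dim d = {S. Kv.subspace S \<and> Kv.dim S = d}"

lemma span_independent_tuple_subspace_of_dim:
  assumes "S \<in> subspaces_of_dim (card B)" "y \<in> independent_tuples B S"
  shows "Kv.span (y ` B) = S"
proof (rule Kv.subspace_dim_equal)
  have "card (y ` B) = card B" using assms(2) by (simp add: independent_tuples_def card_image)
  then show "Kv.dim S \<le> Kv.dim (Kv.span (y ` B))"
    using assms by (simp add: subspaces_of_dim_def independent_tuples_def Kv.dim_eq_card_independent)
qed (use assms span_independent_tuple in \<open>auto simp: subspaces_of_dim_def\<close>)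

text \<open>Counting ordered bases of the whole space by the subspace they span gives the Gaussian
  binomial coefficient.\<close>
lemma card_subspaces_of_dim:
  "real (card (subspaces_of_dim d)) * (\<Prod>i<d. real CARD('K) ^ d - real CARD('K) ^ i)
    = (\<Prod>i<d. real CARD('F) - real CARD('K) ^ i)"
proof -
  let ?T = "{..<d}"
  have fin: "finite (subspaces_of_dim d)" by simp
  have tuples_UNIV: "independent_tuples ?T UNIV = (\<Union>S\<in>subspaces_of_dim d. independent_tuples ?T S)"
  proof (intro equalityI subsetI)
    fix y assume y: "y \<in> independent_tuples ?T UNIV"
    have "card (y ` ?T) = d" using y by (simp add: independent_tuples_def card_image)
    then have "Kv.span (y ` ?T) \<in> subspaces_of_dim d"
      using y by (simp add: subspaces_of_dim_def independent_tuples_def Kv.dim_eq_card_independent)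
    moreover have "y \<in> independent_tuples ?T (Kv.span (y ` ?T))"
      using y by (auto simp: independent_tuples_def intro: Kv.span_base)
    ultimately show "y \<in> (\<Union>S\<in>subspaces_of_dim d. independent_tuples ?T S)" by blast
  qed (auto simp: independent_tuples_def)
  have "card (independent_tuples ?T UNIV) = (\<Sum>S\<in>subspaces_of_dim d. card (independent_tuples ?T S))"
    unfolding tuples_UNIV using span_independent_tuple_subspace_of_dim[where B = ?T]
    by (intro card_UN_disjoint fin) (auto simp: finite_independent_tuples)
  then have "real (card (independent_tuples ?T UNIV))
      = (\<Sum>S\<in>subspaces_of_dim d. (\<Prod>i<d. real CARD('K) ^ d - real CARD('K) ^ i))"
    by (simp add: card_independent_tuples card_subspace subspaces_of_dim_def)
  then show ?thesis
    by (simp add: card_independent_tuples)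
qed

lemma rank_ball_subset_subspaces:
  assumes "t \<le> Kv.dim (UNIV :: 'F set)"
  shows "{u. length u = n \<and> rk emb u \<le> t}
    \<subseteq> (\<Union>S\<in>subspaces_of_dim t. {u. set u \<subseteq> S \<and> length u = n})"
proof
  fix u :: "'F list" assume "u \<in> {u. length u = n \<and> rk emb u \<le> t}"
  then have u: "length u = n" "rk emb u \<le> t" by simp_all
  obtain B where B: "B \<subseteq> set u" "Kv.independent B" "set u \<subseteq> Kv.span B" "card B = rk emb u"
    using Kv.basis_exists[of "set u"] unfolding rk_eq_dim by blast
  define E where "E = Kv.extend_basis B"
  have E: "B \<subseteq> E" "Kv.independent E" "Kv.span E = UNIV"
    unfolding E_def using B(2)
    by (simp_all add: Kv.extend_basis_superset Kv.independent_extend_basis Kv.span_extend_basis)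
  have finE: "finite E" using E(2) Kv.finiteI_independent by blast
  have "card E = Kv.dim (UNIV :: 'F set)"
    using E Kv.dim_eq_card_independent Kv.dim_span by metis
  then have "t - card B \<le> card (E - B)"
    using assms card_Diff_subset[OF finite_subset[OF E(1) finE] E(1)] by simp
  then obtain D where D: "D \<subseteq> E - B" "card D = t - card B"
    using obtain_subset_with_card_n by metis
  have finD: "finite D" "finite B" using D(1) E(1) finE finite_subset by blast+
  have "card (B \<union> D) = t"
    using card_Un_disjoint[OF finD(2,1)] D u B(4) by auto
  moreover have "Kv.independent (B \<union> D)"
    using E D by (intro Kv.independent_mono[OF E(2)]) auto
  ultimately have "Kv.span (B \<union> D) \<in> subspaces_of_dim t"
    by (simp add: subspaces_of_dim_def Kv.dim_eq_card_independent)
  moreover have "set u \<subseteq> Kv.span (B \<union> D)"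
    using B(3) Kv.span_mono[of B "B \<union> D"] by blast
  ultimately show "u \<in> (\<Union>S\<in>subspaces_of_dim t. {u. set u \<subseteq> S \<and> length u = n})"
    using u by blast
qed

lemma card_rank_ball_le:
  assumes qm: "CARD('F) = CARD('K) ^ m" and "t \<le> m"
  shows "real (card {u :: 'F list. length u = n \<and> rk emb u \<le> t})
      * (real CARD('K) ^ (t * t) * (\<Prod>j<t. 1 - 1 / real CARD('K) ^ Suc j))
    \<le> real CARD('K) ^ (m * t + t * n)"
proof -
  let ?q = "real CARD('K)"
  let ?G = "\<Prod>i<t. ?q ^ t - ?q ^ i"
  have q: "1 < ?q" using card_finite_field_ge_2[where 'a = 'K] by simp
  have "card {u :: 'F list. length u = n \<and> rk emb u \<le> t}
      \<le> card (\<Union>S\<in>subspaces_of_dim t. {u. set u \<subseteq> S \<and> length u = n})"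
    using rank_ball_subset_subspaces[of t n] assms dim_UNIV_eq[OF qm]
    by (intro card_mono) (auto intro: finite_lists_of_length)
  also have "\<dots> \<le> (\<Sum>S\<in>subspaces_of_dim t. card {u. set u \<subseteq> S \<and> length u = n})"
    by (rule card_UN_le) simp
  also have "\<dots> = card (subspaces_of_dim t) * CARD('K) ^ (t * n)"
    by (simp add: card_lists_length_eq card_subspace subspaces_of_dim_def power_mult)
  finally have ball: "real (card {u :: 'F list. length u = n \<and> rk emb u \<le> t})
      \<le> real (card (subspaces_of_dim t)) * ?q ^ (t * n)"
    by (simp flip: of_nat_power of_nat_mult)
  have "real (card (subspaces_of_dim t)) * ?G = (\<Prod>i<t. ?q ^ m - ?q ^ i)"
    using card_subspaces_of_dim[of t] qm by simp
  also have "\<dots> \<le> (\<Prod>i<t. ?q ^ m)"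
    using q \<open>t \<le> m\<close> by (intro prod_mono) (auto intro: power_increasing)
  finally have subspaces: "real (card (subspaces_of_dim t)) * ?G \<le> ?q ^ (m * t)"
    by (simp add: power_mult)
  have "real (card {u :: 'F list. length u = n \<and> rk emb u \<le> t})
      * (?q ^ (t * t) * (\<Prod>j<t. 1 - 1 / ?q ^ Suc j))
    \<le> real (card (subspaces_of_dim t)) * ?q ^ (t * n) * ?G"
  proof (rule mult_mono[OF ball prod_power_diff_ge[OF q order_refl[of t]]])
    have "0 < (\<Prod>j<t. 1 - 1 / ?q ^ Suc j)"
      using one_minus_inverse_power_pos[OF q] by (intro prod_pos) blast
    then show "0 \<le> ?q ^ (t * t) * (\<Prod>j<t. 1 - 1 / ?q ^ Suc j)"
      by (intro mult_nonneg_nonneg) (simp_all only: zero_le_power of_nat_0_le_iff less_imp_le)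
  qed simp
  also have "\<dots> \<le> ?q ^ (m * t) * ?q ^ (t * n)"
    using subspaces q by (simp add: mult.commute mult.left_commute mult_right_mono)
  finally show ?thesis by (simp add: power_add)
qed

definition GL :: "('F \<Rightarrow> 'F) set" where
  "GL = {h. klin h \<and> bij h}"

lemma GL_id: "id \<in> GL"
  by (simp add: GL_def Kv.linear_id)

lemma GL_inv: "h \<in> GL \<Longrightarrow> inv h \<in> GL"
  unfolding GL_def using Kv.inj_linear_imp_inv_linear bij_imp_bij_inv bij_is_inj by blast

lemma GL_add: "h \<in> GL \<Longrightarrow> h (a + b) = h a + h b"
  unfolding GL_def using KP.linear_add by blast

lemma rk_map_GL:
  assumes "h \<in> GL"
  shows "rk emb (map h x) = rk emb x"
  using assms KP.dim_image_eq[of h "set x"]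
  by (auto simp: GL_def rk_eq_dim bij_def intro: inj_on_subset)

lemma GL_extends_independent_tuple:
  assumes B: "Kv.independent B" and y: "y \<in> independent_tuples B UNIV"
  obtains h where "h \<in> GL" "\<And>v. v \<in> B \<Longrightarrow> h v = y v"
proof -
  have "\<exists>h. klin h \<and> inj h \<and> (\<forall>v\<in>B. h v = y v)"
    using Kv.linear_independent_extend_inj[OF B] y by (simp add: independent_tuples_def)
  then obtain h where h: "klin h" "inj h" "\<And>v. v \<in> B \<Longrightarrow> h v = y v"
    by blast
  then have "h \<in> GL" using finite_UNIV_inj_surj[of h] by (simp add: GL_def bij_def)
  then show ?thesis using h(3) that by blast
qed

definition orbit :: "'F list \<Rightarrow> 'F list set" where
  "orbit x = (\<lambda>h. map h x) ` GL"

lemma finite_orbit: "finite (orbit x)"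
  by (simp add: orbit_def finite_subset[of GL UNIV])

lemma orbit_self: "x \<in> orbit x"
  unfolding orbit_def using GL_id by (intro image_eqI[of _ _ id]) simp_all

lemma orbit_sym:
  assumes "a \<in> orbit b"
  shows "b \<in> orbit a"
proof -
  obtain h where h: "h \<in> GL" "a = map h b" using assms unfolding orbit_def by blast
  then have "map (inv h) a = b" by (simp add: GL_def bij_is_inj)
  then show ?thesis unfolding orbit_def using GL_inv[OF h(1)] by blast
qed

lemma rk_orbit: "a \<in> orbit b \<Longrightarrow> rk emb a = rk emb b"
  unfolding orbit_def using rk_map_GL by auto

lemma length_orbit: "a \<in> orbit b \<Longrightarrow> length a = length b"
  unfolding orbit_def by auto

lemma card_orbit_ge:
  "(\<Prod>i<rk emb x. real CARD('F) - real CARD('K) ^ i) \<le> card (orbit x)"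
proof -
  obtain B where B: "B \<subseteq> set x" "Kv.independent B" "set x \<subseteq> Kv.span B" "card B = rk emb x"
    using Kv.basis_exists[of "set x"] unfolding rk_eq_dim by blast
  have "\<forall>y\<in>independent_tuples B UNIV. \<exists>h\<in>GL. \<forall>v\<in>B. h v = y v"
    using GL_extends_independent_tuple[OF B(2)] by metis
  then obtain ext where ext: "\<And>y. y \<in> independent_tuples B UNIV \<Longrightarrow> ext y \<in> GL"
    "\<And>y v. y \<in> independent_tuples B UNIV \<Longrightarrow> v \<in> B \<Longrightarrow> ext y v = y v"
    by metis
  have "inj_on (\<lambda>y. map (ext y) x) (independent_tuples B UNIV)"
  proof (rule inj_onI)
    fix y1 y2 assume y: "y1 \<in> independent_tuples B UNIV" "y2 \<in> independent_tuples B UNIV"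
      and "map (ext y1) x = map (ext y2) x"
    then have "y1 v = y2 v" if "v \<in> B" for v
      using that B(1) ext(2) by (metis map_eq_conv subsetD)
    then show "y1 = y2"
      using y by (auto simp: independent_tuples_def intro: PiE_ext)
  qed
  moreover have "(\<lambda>y. map (ext y) x) ` independent_tuples B UNIV \<subseteq> orbit x"
    unfolding orbit_def using ext(1) by blast
  ultimately have "card (independent_tuples B UNIV) \<le> card (orbit x)"
    using card_inj_on_le finite_orbit by blast
  then show ?thesis
    using card_independent_tuples[OF Kv.finiteI_independent[OF B(2)] Kv.subspace_UNIV] B(4)
    by simp
qed

lemma rk_vsub_map_le:
  assumes h1: "klin h1" and h2: "klin h2" and x: "set x \<subseteq> Kv.span B"
    and agree: "\<And>v. v \<in> B - B1 \<Longrightarrow> h1 v = h2 v" and fin: "finite B1"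
  shows "rk emb (vsub (map h1 x) (map h2 x)) \<le> card B1"
proof -
  define d where "d z = h1 z - h2 z" for z
  have d: "klin d" unfolding d_def using h1 h2 by (rule KP.linear_compose_sub)
  have "set (vsub (map h1 x) (map h2 x)) = d ` set x" by (simp add: vsub_map d_def)
  also have "\<dots> \<subseteq> d ` Kv.span B" using x by (rule image_mono)
  also have "\<dots> = Kv.span (d ` B)" by (rule KP.linear_span_image[OF d, symmetric])
  also have "\<dots> \<subseteq> Kv.span (d ` B1)"
  proof (rule Kv.span_minimal[OF _ Kv.subspace_span], clarify)
    fix v assume "v \<in> B"
    then show "d v \<in> Kv.span (d ` B1)"
      using agree[of v] by (cases "v \<in> B1") (auto simp: d_def Kv.span_base Kv.span_zero)
  qed
  finally have "rk emb (vsub (map h1 x) (map h2 x)) \<le> card (d ` B1)"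
    unfolding rk_eq_dim using fin by (intro Kv.dim_le_card) simp_all
  also have "\<dots> \<le> card B1" using fin by (rule card_image_le)
  finally show ?thesis .
qed

text \<open>Automorphisms that agree on all but s vectors of a basis of the span of x move x to points at
  rank distance at most s, so a point of P in the orbit is determined by the images of the
  remaining rk x - s basis vectors.\<close>
lemma card_separated_inter_orbit_le:
  assumes sep: "\<And>a b. a \<in> P \<Longrightarrow> b \<in> P \<Longrightarrow> a \<noteq> b \<Longrightarrow> s < rk emb (vsub a b)"
    and s: "s \<le> rk emb x"
  shows "card (P \<inter> orbit x) \<le> CARD('F) ^ (rk emb x - s)"
proof -
  obtain B where B: "B \<subseteq> set x" "Kv.independent B" "set x \<subseteq> Kv.span B" "card B = rk emb x"
    using Kv.basis_exists[of "set x"] unfolding rk_eq_dim by blast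
  have finB: "finite B" using B(2) Kv.finiteI_independent by blast
  obtain B1 where B1: "B1 \<subseteq> B" "card B1 = s"
    using obtain_subset_with_card_n[of s B] s B(4) by metis
  have finB1: "finite B1" using B1(1) finB finite_subset by blast
  have card_B2: "card (B - B1) = rk emb x - s"
    using card_Diff_subset[OF finB1 B1(1)] B1(2) B(4) by simp
  have "\<forall>a\<in>P \<inter> orbit x. \<exists>h. h \<in> GL \<and> a = map h x" unfolding orbit_def by blast
  then obtain hh where hh: "\<And>a. a \<in> P \<inter> orbit x \<Longrightarrow> hh a \<in> GL \<and> a = map (hh a) x"
    by metis
  have "inj_on (\<lambda>a. restrict (hh a) (B - B1)) (P \<inter> orbit x)"
  proof (rule inj_onI, rule ccontr)
    fix a1 a2 assume a: "a1 \<in> P \<inter> orbit x" "a2 \<in> P \<inter> orbit x" "a1 \<noteq> a2"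
      and eq: "restrict (hh a1) (B - B1) = restrict (hh a2) (B - B1)"
    have "rk emb (vsub (map (hh a1) x) (map (hh a2) x)) \<le> s"
      using rk_vsub_map_le[OF _ _ B(3) _ finB1] hh[OF a(1)] hh[OF a(2)] B1(2) eq
      by (simp add: GL_def restrict_def fun_eq_iff) metis
    then show False using sep[of a1 a2] a hh by fastforce
  qed
  moreover have "(\<lambda>a. restrict (hh a) (B - B1)) ` (P \<inter> orbit x) \<subseteq> (B - B1) \<rightarrow>\<^sub>E UNIV"
    by (simp only: image_subset_iff restrict_PiE_iff) simp
  ultimately have "card (P \<inter> orbit x) \<le> card ((B - B1) \<rightarrow>\<^sub>E (UNIV :: 'F set))"
    using finB by (intro card_inj_on_le) simp_all
  then show ?thesis by (simp add: card_PiE finB card_B2)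
qed

text \<open>Averaging over GL-orbits: by the previous lemma X meets each orbit in at most a fraction
  q^(-ms)/K_m of its elements, where K_m is the product below.\<close>
lemma sum_separated_le:
  fixes f :: "'F list \<Rightarrow> real"
  assumes qm: "CARD('F) = CARD('K) ^ m" and "n \<le> m"
    and X_len: "\<And>x. x \<in> X \<Longrightarrow> length x = n"
    and X_rk: "\<And>x. x \<in> X \<Longrightarrow> s \<le> rk emb x"
    and X_sep: "\<And>a b. a \<in> X \<Longrightarrow> b \<in> X \<Longrightarrow> a \<noteq> b \<Longrightarrow> s < rk emb (vsub a b)"
    and f_GL: "\<And>h x. h \<in> GL \<Longrightarrow> f (map h x) = f x"
    and f_nonneg: "\<And>x. 0 \<le> f x"
  shows "(\<Sum>x\<in>X. f x) * (real CARD('K) ^ (m * s) * (\<Prod>j<m. 1 - 1 / real CARD('K) ^ Suc j))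
    \<le> (\<Sum>v\<in>{v. length v = n}. f v)"
proof -
  let ?q = "real CARD('K)"
  define Km where "Km = (\<Prod>j<m. 1 - 1 / ?q ^ Suc j)"
  let ?\<rho> = "1 / (?q ^ (m * s) * Km)"
  have q: "1 < ?q" using card_finite_field_ge_2[where 'a = 'K] by simp
  have Km: "0 < Km" unfolding Km_def using one_minus_inverse_power_pos[OF q] by (intro prod_pos) blast
  have density: "card (X \<inter> orbit y) \<le> ?\<rho> * card (orbit x)" if x: "x \<in> X" "y \<in> orbit x" for x y
  proof -
    define w where "w = rk emb x"
    have w: "rk emb y = w" "s \<le> w" "w \<le> m"
      using rk_orbit[OF x(2)] X_rk[OF x(1)] rk_le_length[of x] X_len[OF x(1)] \<open>n \<le> m\<close>
      unfolding w_def by simp_all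
    have "real (card (X \<inter> orbit y)) \<le> ?q ^ (m * (w - s))"
      using card_separated_inter_orbit_le[of X s y, OF X_sep] w qm
      by (simp add: power_mult flip: of_nat_power of_nat_le_iff)
    also have "\<dots> = ?\<rho> * (?q ^ (m * w) * Km)"
    proof -
      have "m * w = m * (w - s) + m * s" using w by (simp flip: add_mult_distrib2)
      then have "?q ^ (m * w) = ?q ^ (m * (w - s)) * ?q ^ (m * s)" by (simp add: power_add)
      then show ?thesis using q Km by simp
    qed
    also have "\<dots> \<le> ?\<rho> * card (orbit x)"
      using order_trans[OF prod_power_diff_ge[OF q w(3), folded Km_def]
          card_orbit_ge[of x, folded w_def, unfolded qm of_nat_power]] q Km
      by (intro mult_left_mono) simp_all
    finally show ?thesis .
  qed
  have "(\<Sum>x\<in>X. f x) \<le> ?\<rho> * (\<Sum>v\<in>{v. length v = n}. f v)"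
  proof (rule sum_le_orbit_density_sum[where orb = orbit])
    show "finite {y :: 'F list. length y = n}"
      by (rule finite_lists_of_length)
    show "f y = f x" if "x \<in> X" "y \<in> orbit x" for x y
      using that f_GL unfolding orbit_def by auto
  qed (use X_len length_orbit orbit_self orbit_sym f_nonneg density q Km in auto)
  then show ?thesis using q Km unfolding Km_def[symmetric] by (simp add: field_simps)
qed

lemma card_rank_shift_map_GL:
  assumes h: "h \<in> GL"
  shows "card {u. length u = n \<and> rk emb u \<le> t \<and> rk emb (vadd (map h x) u) = r}
    = card {u. length u = n \<and> rk emb u \<le> t \<and> rk emb (vadd x u) = r}"
proof -
  let ?A = "{u. length u = n \<and> rk emb u \<le> t \<and> rk emb (vadd x u) = r}"
  have bij: "bij h" using h by (simp add: GL_def)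
  have shift: "rk emb (vadd (map h x) (map h u)) = rk emb (vadd x u)" for u
    using rk_map_GL[OF h, of "vadd x u"] map_vadd[of h x u] GL_add[OF h] by simp
  have "{u. length u = n \<and> rk emb u \<le> t \<and> rk emb (vadd (map h x) u) = r} = map h ` ?A"
  proof (intro equalityI subsetI)
    fix u assume u: "u \<in> {u. length u = n \<and> rk emb u \<le> t \<and> rk emb (vadd (map h x) u) = r}"
    have "map h (map (inv h) u) = u" using bij by (simp add: bij_is_surj surj_f_inv_f map_idI)
    then show "u \<in> map h ` ?A"
      using u shift[of "map (inv h) u"] rk_map_GL[OF GL_inv[OF h], of u]
      by (intro image_eqI[of _ _ "map (inv h) u"]) auto
  qed (use shift rk_map_GL[OF h] in auto)
  moreover have "inj (map h)" using bij by (simp add: bij_is_inj inj_mapI)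
  ultimately show ?thesis by (simp add: card_image[OF inj_on_subset[OF _ subset_UNIV]])
qed


lemma sum_codeword_differences_le:
  fixes f :: "'F list \<Rightarrow> real"
  assumes qm: "CARD('F) = CARD('K) ^ m" and nm: "n \<le> m"
    and C_len: "\<forall>x\<in>C. length x = n" and c: "c \<in> C"
    and C_sep: "\<And>c1 c2. c1 \<in> C \<Longrightarrow> c2 \<in> C \<Longrightarrow> c1 \<noteq> c2 \<Longrightarrow> s < rk emb (vsub c1 c2)"
    and f_GL: "\<And>h x. h \<in> GL \<Longrightarrow> f (map h x) = f x"
    and f_nonneg: "\<And>x. 0 \<le> f x"
  shows "(\<Sum>x\<in>{vsub c' c | c'. c' \<in> C \<and> c' \<noteq> c}. f x)
      * (real CARD('K) ^ (m * s) * (\<Prod>j<m. 1 - 1 / real CARD('K) ^ Suc j))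
    \<le> (\<Sum>v\<in>{v. length v = n}. f v)"
proof (rule sum_separated_le[OF qm nm _ _ _ f_GL f_nonneg])
  let ?X = "{vsub c' c | c'. c' \<in> C \<and> c' \<noteq> c}"
  have vsub_cancel: "vsub (vsub c1 c) (vsub c2 c) = vsub c1 c2" if "c1 \<in> C" "c2 \<in> C" for c1 c2
    using that C_len c by (auto intro!: nth_equalityI simp: nth_vsub)
  show "length x = n" if "x \<in> ?X" for x
    using that C_len c by auto
  show "s \<le> rk emb x" if "x \<in> ?X" for x
    using that c C_sep[of _ c] by (auto intro!: less_imp_le)
  show "s < rk emb (vsub x y)" if xy: "x \<in> ?X" "y \<in> ?X" "x \<noteq> y" for x y
  proof -
    obtain c1 c2 where "c1 \<in> C" "c2 \<in> C" "x = vsub c1 c" "y = vsub c2 c"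
      using xy(1,2) by blast
    then show ?thesis using xy(3) C_sep vsub_cancel by auto
  qed
qed

lemma card_decoder_error_rank_le:
  assumes qm: "CARD('F) = CARD('K) ^ m" and nm: "n \<le> m" and tn: "t \<le> n"
    and C_len: "\<forall>x\<in>C. length x = n" and c: "c \<in> C"
    and C_sep: "\<And>c1 c2. c1 \<in> C \<Longrightarrow> c2 \<in> C \<Longrightarrow> c1 \<noteq> c2 \<Longrightarrow> 2 * t < rk emb (vsub c1 c2)"
  shows "real (card {e. length e = n \<and> rk emb e = r \<and> decoder_error emb C t c e})
      * (real CARD('K) ^ (t * t) * (\<Prod>j<m. 1 - 1 / real CARD('K) ^ Suc j)
          * (\<Prod>j<t. 1 - 1 / real CARD('K) ^ Suc j))
    \<le> card {e :: 'F list. length e = n \<and> rk emb e = r}"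
proof -
  let ?q = "real CARD('K)"
  define Km where "Km = (\<Prod>j<m. 1 - 1 / ?q ^ Suc j)"
  define Kt where "Kt = (\<Prod>j<t. 1 - 1 / ?q ^ Suc j)"
  define X where "X = {vsub c' c | c'. c' \<in> C \<and> c' \<noteq> c}"
  define g where "g x = real (card {u. length u = n \<and> rk emb u \<le> t \<and> rk emb (vadd x u) = r})" for x
  let ?E = "{e. length e = n \<and> rk emb e = r \<and> decoder_error emb C t c e}"
  let ?ball = "{u :: 'F list. length u = n \<and> rk emb u \<le> t}"
  let ?Vr = "{e :: 'F list. length e = n \<and> rk emb e = r}"
  have q: "1 < ?q" using card_finite_field_ge_2[where 'a = 'K] by simp
  have Km: "0 < Km" and Kt: "0 < Kt"
    unfolding Km_def Kt_def using one_minus_inverse_power_pos[OF q] by (auto intro: prod_pos)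
  have finC: "finite C"
    by (rule finite_subset[OF _ finite_lists_of_length[of n]]) (use C_len in auto)
  have errors: "real (card ?E) \<le> (\<Sum>x\<in>X. g x)"
    using card_decoder_error_le_sum[OF C_len c finC, of emb r t]
    unfolding X_def g_def by (simp flip: of_nat_sum)
  have "(\<Sum>x\<in>X. g x) * (?q ^ (m * (2 * t)) * Km) \<le> (\<Sum>y\<in>{y. length y = n}. g y)"
    unfolding X_def Km_def g_def
    using card_rank_shift_map_GL by (intro sum_codeword_differences_le[OF qm nm C_len c C_sep]) simp_all
  also have "\<dots> = real (card ?ball) * real (card ?Vr)"
    unfolding g_def using sum_card_shift[of n "\<lambda>u. rk emb u \<le> t" "\<lambda>e. rk emb e = r"]
    by (simp flip: of_nat_sum of_nat_mult)
  finally have averaged: "(\<Sum>x\<in>X. g x) * (?q ^ (m * (2 * t)) * Km) \<le> real (card ?ball) * real (card ?Vr)" .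
  have ball: "real (card ?ball) * (?q ^ (t * t) * Kt) \<le> ?q ^ (m * (2 * t))"
    using card_rank_ball_le[OF qm, of t n, folded Kt_def] tn nm q
    by (auto elim!: order_trans intro: power_increasing)
  have "real (card ?E) * (?q ^ (t * t) * Km * Kt) * ?q ^ (m * (2 * t))
      \<le> (\<Sum>x\<in>X. g x) * (?q ^ (m * (2 * t)) * Km) * (?q ^ (t * t) * Kt)"
    using errors q Km Kt by (simp add: mult_right_mono ac_simps)
  also have "\<dots> \<le> real (card ?Vr) * (real (card ?ball) * (?q ^ (t * t) * Kt))"
    using averaged q Kt by (simp add: mult_right_mono ac_simps)
  also have "\<dots> \<le> real (card ?Vr) * ?q ^ (m * (2 * t))"
    using ball by (simp add: mult_left_mono)
  finally show ?thesis
    using q unfolding Km_def Kt_def by simp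
qed

lemma prob_decoder_error_le:
  assumes qm: "CARD('F) = CARD('K) ^ m" and nm: "n \<le> m" and tn: "t \<le> n"
    and C_len: "\<forall>x\<in>C. length x = n" and c: "c \<in> C"
    and C_sep: "\<And>c1 c2. c1 \<in> C \<Longrightarrow> c2 \<in> C \<Longrightarrow> c1 \<noteq> c2 \<Longrightarrow> 2 * t < rk emb (vsub c1 c2)"
    and p_len: "\<forall>e\<in>set_pmf p. length e = n"
    and p_rank: "\<forall>e e'. length e = n \<longrightarrow> length e' = n \<longrightarrow> rk emb e = rk emb e'
                     \<longrightarrow> pmf p e = pmf p e'"
  shows "measure_pmf.prob p {e. decoder_error emb C t c e}
    \<le> 1 / (real CARD('K) ^ (t * t) * (\<Prod>j<m. 1 - 1 / real CARD('K) ^ Suc j)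
          * (\<Prod>j<t. 1 - 1 / real CARD('K) ^ Suc j))"
    (is "_ \<le> 1 / ?D")
proof (rule measure_pmf_le_classwise_fraction[where cls = "rk emb" and V = "{e. length e = n}"])
  have q: "1 < real CARD('K)" using card_finite_field_ge_2[where 'a = 'K] by simp
  then have D: "0 < ?D"
    using one_minus_inverse_power_pos[OF q] by (intro mult_pos_pos prod_pos) simp_all
  then show "0 \<le> 1 / ?D" by simp
  show "finite {e :: 'F list. length e = n}" by (rule finite_lists_of_length)
  show "set_pmf p \<subseteq> {e. length e = n}" using p_len by blast
  show "pmf p x = pmf p y" if "x \<in> {e. length e = n}" "y \<in> {e. length e = n}" "rk emb x = rk emb y"
    for x y
    using that p_rank by blast
  show "card {e \<in> {e. decoder_error emb C t c e} \<inter> {e. length e = n}. rk emb e = r}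
      \<le> 1 / ?D * card {e \<in> {e. length e = n}. rk emb e = r}" for r
  proof -
    have "{e \<in> {e. decoder_error emb C t c e} \<inter> {e. length e = n}. rk emb e = r}
        = {e. length e = n \<and> rk emb e = r \<and> decoder_error emb C t c e}" by blast
    then show ?thesis
      using card_decoder_error_rank_le[OF qm nm tn C_len c C_sep, of r] D by (simp add: field_simps)
  qed
qed

end

lemma inverse_partial_products_less:
  fixes q :: real
  assumes q: "1 < q"
  shows "1 / (q ^ (t * t) * (\<Prod>j<m. 1 - 1 / q ^ Suc j) * (\<Prod>j<t. 1 - 1 / q ^ Suc j))
    < (\<Prod>j. 1 - 1 / q ^ Suc j) powi (-2) * (1 / q ^ (t\<^sup>2))"
proof -
  define K where "K = (\<Prod>j. 1 - 1 / q ^ Suc j)"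
  define Km where "Km = (\<Prod>j<m. 1 - 1 / q ^ Suc j)"
  define Kt where "Kt = (\<Prod>j<t. 1 - 1 / q ^ Suc j)"
  have K: "0 < K" "K < Km" "K < Kt"
    unfolding K_def Km_def Kt_def
    by (rule prodinf_one_minus_inverse_powers_pos[OF q] prodinf_one_minus_inverse_powers_less[OF q])+
  then have "K * K < Km * Kt" by (intro mult_strict_mono) simp_all
  then have "q ^ (t * t) * K * K < q ^ (t * t) * Km * Kt"
    using mult_strict_left_mono[of "K * K" "Km * Kt" "q ^ (t * t)"] q by (simp add: mult.assoc)
  then have "1 / (q ^ (t * t) * Km * Kt) < 1 / (q ^ (t * t) * K * K)"
    using K q by (intro divide_strict_left_mono mult_pos_pos) simp_all
  also have "\<dots> = K powi (-2) * (1 / q ^ (t\<^sup>2))"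
    by (simp add: power2_eq_square power_int_minus field_simps)
  finally show ?thesis unfolding K_def Km_def Kt_def .
qed

theorem corollary3:
  fixes emb :: "'K::{finite,field} \<Rightarrow> 'F::{finite,field}"
    and q m n k t :: nat
    and C :: "'F list set"
    and c :: "'F list"
    and p :: "'F list pmf"
  assumes emb: "field_embedding emb"
    and q: "CARD('K) = q"
    and qm: "CARD('F) = q ^ m"
    and nm: "n \<le> m"
    and k: "1 \<le> k" "k \<le> n"
    and C_len: "\<forall>x\<in>C. length x = n"
    and C_card: "card C = q ^ (m * k)"
    and dist: "min_rank_dist emb C = n - k + 1"
    and t: "n - k + 1 = 2 * t + 1"
    and c: "c \<in> C"
    and p_len: "\<forall>e\<in>set_pmf p. length e = n"
    and p_rank: "\<forall>e e'. length e = n \<longrightarrow> length e' = n \<longrightarrow> rk emb e = rk emb e'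
                     \<longrightarrow> pmf p e = pmf p e'"
  shows "measure_pmf.prob p {e. decoder_error emb C t c e}
           < (prodinf (\<lambda>j. 1 - 1 / real q ^ Suc j)) powi (-2) * (1 / real q ^ (t^2))"
proof -
  interpret finite_field_extension emb by unfold_locales (fact emb)
  have q1: "1 < real q" using card_finite_field_ge_2[where 'a = 'K] q by simp
  have qm': "CARD('F) = CARD('K) ^ m" using qm q by simp
  have tn: "t \<le> n" using k t by linarith
  have finC: "finite C"
    by (rule finite_subset[OF _ finite_lists_of_length[of n]]) (use C_len in auto)
  have C_sep: "2 * t < rk emb (vsub c1 c2)" if "c1 \<in> C" "c2 \<in> C" "c1 \<noteq> c2" for c1 c2
    using min_rank_dist_le_rk[OF finC that, of emb] dist t by simp
  have "measure_pmf.prob p {e. decoder_error emb C t c e}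
      \<le> 1 / (real q ^ (t * t) * (\<Prod>j<m. 1 - 1 / real q ^ Suc j) * (\<Prod>j<t. 1 - 1 / real q ^ Suc j))"
    using prob_decoder_error_le[OF qm' nm tn C_len c C_sep p_len p_rank] unfolding q .
  also have "\<dots> < (\<Prod>j. 1 - 1 / real q ^ Suc j) powi (-2) * (1 / real q ^ (t\<^sup>2))"
    by (rule inverse_partial_products_less[OF q1])
  finally show ?thesis .
qed

end
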